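(* Let $\mathbb{K}$ be a field of characteristic $0$. For a positive integer $r$, let $\mu(r)$ be the least integer $h$ such that $(1,r,h,h,r,1)$ is the Hilbert function of a standard graded Artinian Gorenstein $\mathbb{K}$-algebra (socle degree $5$), and let $\delta(r)=r-\mu(r)$. Then for every integer $m\geq 3$, \[\delta\!\left(m+\binom{m+3}{4}\right)\geq\frac{m+5}{4}\binom{m}{3}.\]
   Context: Standard graded Artinian Gorenstein algebras $Q/I$ are taken with $I$ containing no linear forms, so the codimension equals $h_1$. *)

theory Defs
  imports Complex_Main "HOL-Library.Poly_Mapping"
begin

text \<open>Polynomials over a field 'k in variables x_0, x_1, ...: finitely supported
  maps from monomials (exponent vectors nat \<Rightarrow>0 nat) to coefficients.\<close>
type_synonym 'k mpoly = "(nat \<Rightarrow>\<^sub>0 nat) \<Rightarrow>\<^sub>0 'k"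

definition mdeg :: "(nat \<Rightarrow>\<^sub>0 nat) \<Rightarrow> nat" where
  "mdeg m = (\<Sum>i\<in>Poly_Mapping.keys m. Poly_Mapping.lookup m i)"

definition polyring :: "nat \<Rightarrow> 'k::field mpoly set" where
  "polyring n = {p. \<forall>m\<in>Poly_Mapping.keys p. Poly_Mapping.keys m \<subseteq> {..<n}}"

definition homog :: "nat \<Rightarrow> nat \<Rightarrow> 'k::field mpoly set" where
  "homog n d = {p \<in> polyring n. \<forall>m\<in>Poly_Mapping.keys p. mdeg m = d}"

definition hcomp :: "nat \<Rightarrow> 'k::field mpoly \<Rightarrow> 'k mpoly" where
  "hcomp d p = Poly_Mapping.mapp (\<lambda>m c. if mdeg m = d then c else 0) p"

definition cmul :: "'k::field \<Rightarrow> 'k mpoly \<Rightarrow> 'k mpoly" where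
  "cmul c p = Poly_Mapping.single 0 c * p"

definition var :: "nat \<Rightarrow> 'k::field mpoly" where
  "var j = Poly_Mapping.single (Poly_Mapping.single j 1) 1"

definition is_ideal :: "nat \<Rightarrow> 'k::field mpoly set \<Rightarrow> bool" where
  "is_ideal n I \<longleftrightarrow> I \<subseteq> polyring n \<and> 0 \<in> I \<and>
     (\<forall>p\<in>I. \<forall>q\<in>I. p + q \<in> I) \<and>
     (\<forall>p\<in>I. \<forall>q\<in>polyring n. q * p \<in> I)"

definition homogeneous_ideal :: "nat \<Rightarrow> 'k::field mpoly set \<Rightarrow> bool" where
  "homogeneous_ideal n I \<longleftrightarrow> is_ideal n I \<and> (\<forall>p\<in>I. \<forall>d. hcomp d p \<in> I)"

definition indep_mod :: "'k::field mpoly set \<Rightarrow> 'k mpoly set \<Rightarrow> bool" where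
  "indep_mod I S \<longleftrightarrow> finite S \<and>
     (\<forall>c. (\<Sum>s\<in>S. cmul (c s) s) \<in> I \<longrightarrow> (\<forall>s\<in>S. c s = 0))"

definition qdim :: "'k::field mpoly set \<Rightarrow> 'k mpoly set \<Rightarrow> nat" where
  "qdim I V = Sup {card S | S. S \<subseteq> V \<and> indep_mod I S}"

definition socle :: "nat \<Rightarrow> 'k::field mpoly set \<Rightarrow> 'k mpoly set" where
  "socle n I = {f \<in> polyring n. \<forall>j<n. var j * f \<in> I}"

text \<open>Q/I is a standard graded Artinian Gorenstein K-algebra: I a homogeneous
  ideal with no linear forms, Q/I finite dimensional (Q_d \<subseteq> I for d large),
  and one-dimensional socle.\<close>
definition graded_AG :: "nat \<Rightarrow> 'k::field mpoly set \<Rightarrow> bool" where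
  "graded_AG n I \<longleftrightarrow> homogeneous_ideal n I \<and>
     I \<inter> homog n 1 = {0} \<and>
     (\<exists>N. \<forall>d\<ge>N. homog n d \<subseteq> I) \<and>
     qdim I (socle n I) = 1"

definition hilb :: "nat \<Rightarrow> 'k::field mpoly set \<Rightarrow> nat \<Rightarrow> nat" where
  "hilb n I d = qdim I (homog n d)"

definition AG_hilbert_function :: "'k::field itself \<Rightarrow> (nat \<Rightarrow> nat) \<Rightarrow> bool" where
  "AG_hilbert_function _ h \<longleftrightarrow>
     (\<exists>n (I :: 'k mpoly set). graded_AG n I \<and> (\<forall>d. hilb n I d = h d))"

definition seq_5 :: "nat \<Rightarrow> nat \<Rightarrow> nat \<Rightarrow> nat" where
  "seq_5 r h d = (if d = 0 then 1 else if d = 1 then r else if d = 2 then h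
                  else if d = 3 then h else if d = 4 then r else if d = 5 then 1 else 0)"

definition mu :: "'k::field itself \<Rightarrow> nat \<Rightarrow> nat" where
  "mu K r = (LEAST h. AG_hilbert_function K (seq_5 r h))"

definition delta :: "'k::field itself \<Rightarrow> nat \<Rightarrow> int" where
  "delta K r = int r - int (mu K r)"

end

theory Submission
  imports Defs "HOL-Library.Multiset"
begin

text \<open>Macaulay duality: for a finite set U of monomials of degree s, the annihilator of the
  dual form F_U = \<Sum>{X^u | u \<in> U} under contraction is a graded Artinian Gorenstein ideal of socle
  degree s, and its Hilbert function in degree d is the rank of the contractions x^b \<circ> F_U with
  deg b = s - d. When the supports of these contractions are pairwise equal or disjoint, that rank
  is the number of distinct nonzero supports.

  Take variables x_0, ..., x_{m-1}, one more variable y_k for each of the C(m+3,4) quartic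
  monomials M_k in the x's, and F = \<Sum> y_k M_k; so r = m + C(m+3,4). Contracting F by an
  x-monomial b gives \<Sum> y_k (x^b \<circ> M_k), different x-monomials giving disjoint supports, while
  contracting by a monomial involving some y_k leaves at most one x-monomial. Hence
  h_d = C(m+4-d, 5-d) + C(m+d-1, d) for 1 \<le> d \<le> 4, so (1, r, h, h, r, 1) with
  h = C(m+1,2) + C(m+2,3) is a Gorenstein Hilbert function, \<mu>(r) \<le> h, and r - h is the asserted
  bound.\<close>

type_synonym monom = "nat \<Rightarrow>\<^sub>0 nat"

definition monomials :: "nat \<Rightarrow> nat \<Rightarrow> monom set" where
  "monomials n d = {a. Poly_Mapping.keys a \<subseteq> {..<n} \<and> mdeg a = d}"

lemma keys_add_monom: "Poly_Mapping.keys (a + b :: monom) = Poly_Mapping.keys a \<union> Poly_Mapping.keys b"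
  unfolding set_eq_iff Un_iff in_keys_iff lookup_add by simp

lemma lookup_beyond_keys:
  "Poly_Mapping.keys (a :: monom) \<subseteq> {..<m} \<Longrightarrow> m \<le> j \<Longrightarrow> Poly_Mapping.lookup a j = 0"
  by (metis lessThan_iff not_in_keys_iff_lookup_eq_zero not_le subsetD)

lemma mdeg_add: "mdeg (a + b) = mdeg a + mdeg b"
proof -
  have "mdeg c = (\<Sum>i\<in>Poly_Mapping.keys a \<union> Poly_Mapping.keys b. Poly_Mapping.lookup c i)"
    if "Poly_Mapping.keys c \<subseteq> Poly_Mapping.keys a \<union> Poly_Mapping.keys b" for c
    unfolding mdeg_def using that by (intro sum.mono_neutral_left) (auto simp: in_keys_iff)
  then show ?thesis
    by (simp add: keys_add_monom lookup_add sum.distrib)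
qed

lemma mdeg_0 [simp]: "mdeg 0 = 0"
  by (simp add: mdeg_def)

lemma mdeg_single [simp]: "mdeg (Poly_Mapping.single i k) = k"
  by (simp add: mdeg_def)

lemma mdeg_eq_0_iff: "mdeg a = 0 \<longleftrightarrow> a = 0"
proof
  assume "mdeg a = 0"
  then have "\<forall>i\<in>Poly_Mapping.keys a. Poly_Mapping.lookup a i = 0"
    unfolding mdeg_def by simp
  then show "a = 0"
    by (intro poly_mapping_eqI) (metis lookup_zero not_in_keys_iff_lookup_eq_zero)
qed simp

lemma mdeg_eq_1_iff: "mdeg a = 1 \<longleftrightarrow> (\<exists>i. a = Poly_Mapping.single i 1)"
proof
  assume deg: "mdeg a = 1"
  then obtain i where i: "i \<in> Poly_Mapping.keys a"
    by (metis ex_in_conv keys_eq_empty mdeg_eq_0_iff zero_neq_one)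
  have "Poly_Mapping.lookup a i + (\<Sum>j\<in>Poly_Mapping.keys a - {i}. Poly_Mapping.lookup a j) = 1"
    using deg i unfolding mdeg_def by (simp add: sum.remove)
  moreover have "Poly_Mapping.lookup a i \<noteq> 0"
    using i by (simp add: in_keys_iff)
  ultimately have "Poly_Mapping.lookup a i = 1" "(\<Sum>j\<in>Poly_Mapping.keys a - {i}. Poly_Mapping.lookup a j) = 0"
    by linarith+
  then have "a = Poly_Mapping.single i 1"
    by (intro poly_mapping_eqI) (auto simp: lookup_single when_def in_keys_iff)
  then show "\<exists>i. a = Poly_Mapping.single i 1" ..
qed auto

lemma lookup_single_mult:
  "Poly_Mapping.lookup (Poly_Mapping.single (c::monom) (x::'k::field) * g) w =
     (if \<exists>r. w = c + r then x * Poly_Mapping.lookup g (w - c) else 0)"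
proof (cases "\<exists>r. w = c + r")
  case True
  then obtain r where r: "w = c + r" by blast
  have "(\<Sum>q. Poly_Mapping.lookup g q when w = c + q) = (\<Sum>q. Poly_Mapping.lookup g q when q = r)"
    unfolding r by (simp add: eq_commute[of r])
  then show ?thesis using r by (simp add: lookup_mult lookup_single when_mult)
qed (simp add: lookup_mult lookup_single when_mult)

lemma lookup_cmul [simp]: "Poly_Mapping.lookup (cmul c p) a = c * Poly_Mapping.lookup p a"
  unfolding cmul_def by (simp add: lookup_single_mult)

lemma sum_single_lookup: "(\<Sum>a\<in>Poly_Mapping.keys p. Poly_Mapping.single a (Poly_Mapping.lookup p a)) = p"
  by (rule poly_mapping_eqI) (simp add: lookup_sum lookup_single when_def in_keys_iff)

lemma lookup_hcomp: "Poly_Mapping.lookup (hcomp d g) a = (if mdeg a = d then Poly_Mapping.lookup g a else 0)"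
  unfolding hcomp_def by (simp add: lookup_mapp when_def in_keys_iff)

lemma polyring_zero [simp]: "0 \<in> polyring n"
  by (simp add: polyring_def)

lemma polyring_add: "p \<in> polyring n \<Longrightarrow> q \<in> polyring n \<Longrightarrow> p + q \<in> polyring n"
  unfolding polyring_def using keys_add[of p q] by blast

lemma polyring_mult: "p \<in> polyring n \<Longrightarrow> q \<in> polyring n \<Longrightarrow> p * q \<in> polyring n"
proof (unfold polyring_def, intro CollectI ballI)
  fix w assume p: "p \<in> {p. \<forall>a\<in>Poly_Mapping.keys p. Poly_Mapping.keys a \<subseteq> {..<n}}"
    and q: "q \<in> {q. \<forall>b\<in>Poly_Mapping.keys q. Poly_Mapping.keys b \<subseteq> {..<n}}"
    and "w \<in> Poly_Mapping.keys (p * q)"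
  then obtain a b where "w = a + b" "a \<in> Poly_Mapping.keys p" "b \<in> Poly_Mapping.keys q"
    using keys_mult by blast
  then show "Poly_Mapping.keys w \<subseteq> {..<n}"
    using p q by (auto simp: keys_add_monom)
qed

lemma polyring_single: "Poly_Mapping.keys a \<subseteq> {..<n} \<Longrightarrow> Poly_Mapping.single a c \<in> polyring n"
  by (simp add: polyring_def)

lemma polyring_cmul: "p \<in> polyring n \<Longrightarrow> cmul c p \<in> polyring n"
  unfolding cmul_def by (auto intro!: polyring_mult polyring_single)

lemma polyring_sum: "(\<And>s. s \<in> S \<Longrightarrow> f s \<in> polyring n) \<Longrightarrow> sum f S \<in> polyring n"
  by (induction S rule: infinite_finite_induct) (auto intro: polyring_add)

lemma hcomp_polyring: "g \<in> polyring n \<Longrightarrow> hcomp d g \<in> polyring n"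
  unfolding polyring_def hcomp_def using keys_mapp_subset[of _ g] by blast

lemma single_in_homog: "a \<in> monomials n d \<Longrightarrow> Poly_Mapping.single a c \<in> homog n d"
  by (simp add: homog_def monomials_def polyring_single)

lemma bij_betw_multisets_of_size_monomials:
  "bij_betw (\<lambda>M. Abs_poly_mapping (count M)) (multisets_of_size {..<n} d) (monomials n d)"
proof -
  have lookup_count: "Poly_Mapping.lookup (Abs_poly_mapping (count M)) = count M" for M :: "nat multiset"
    using finite_set_mset by (simp add: count_eq_zero_iff[symmetric] Collect_neg_eq[symmetric]
        flip: set_mset_def)
  have keys_count: "Poly_Mapping.keys (Abs_poly_mapping (count M)) = set_mset M" for M :: "nat multiset"
    by (auto simp: in_keys_iff lookup_count count_eq_zero_iff)
  have mdeg_count: "mdeg (Abs_poly_mapping (count M)) = size M" for M :: "nat multiset"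
    by (simp add: mdeg_def keys_count lookup_count size_multiset_overloaded_eq)
  show ?thesis
  proof (rule bij_betwI')
    show "Abs_poly_mapping (count M) = Abs_poly_mapping (count N) \<longleftrightarrow> M = N" for M N :: "nat multiset"
      by (metis lookup_count count_inject)
    show "Abs_poly_mapping (count M) \<in> monomials n d" if "M \<in> multisets_of_size {..<n} d" for M
      using that by (simp add: multisets_of_size_def monomials_def keys_count mdeg_count)
  next
    fix a assume a: "a \<in> monomials n d"
    define M where "M = Abs_multiset (Poly_Mapping.lookup a)"
    have "count M = Poly_Mapping.lookup a"
      unfolding M_def by (rule count_Abs_multiset) (simp flip: in_keys_iff)
    then have "Abs_poly_mapping (count M) = a"
      by simp
    moreover from this have "M \<in> multisets_of_size {..<n} d"
      using a keys_count[of M] mdeg_count[of M] by (simp add: multisets_of_size_def monomials_def)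
    ultimately show "\<exists>M\<in>multisets_of_size {..<n} d. a = Abs_poly_mapping (count M)"
      by metis
  qed
qed

lemma card_monomials: "card (monomials n d) = (n + d - 1) choose d"
  using bij_betw_same_card[OF bij_betw_multisets_of_size_monomials] card_multisets_of_size[of "{..<n}"]
  by simp

lemma finite_monomials [simp]: "finite (monomials n d)"
  using bij_betw_finite[OF bij_betw_multisets_of_size_monomials] finite_multisets_of_size[of "{..<n}"]
  by simp

section \<open>Homogeneous linear systems\<close>

lemma homogeneous_system_eliminate:
  fixes w :: "'s \<Rightarrow> 'b \<Rightarrow> 'k::field"
  assumes S: "finite S" "s0 \<in> S" "w s0 b \<noteq> 0"
    and reduced: "\<forall>b'\<in>B. (\<Sum>s\<in>S - {s0}. c s * (w s b' - w s b / w s0 b * w s0 b')) = 0"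
  defines "c' \<equiv> c(s0 := - (\<Sum>s\<in>S - {s0}. c s * w s b) / w s0 b)"
  shows "\<forall>b'\<in>insert b B. (\<Sum>s\<in>S. c' s * w s b') = 0"
proof
  define T where "T = (\<Sum>s\<in>S - {s0}. c s * w s b)"
  have sum_c': "(\<Sum>s\<in>S. c' s * w s b') = - T / w s0 b * w s0 b' + (\<Sum>s\<in>S - {s0}. c s * w s b')" for b'
  proof -
    have "(\<Sum>s\<in>S. c' s * w s b') = c' s0 * w s0 b' + (\<Sum>s\<in>S - {s0}. c' s * w s b')"
      using S by (simp add: sum.remove)
    also have "(\<Sum>s\<in>S - {s0}. c' s * w s b') = (\<Sum>s\<in>S - {s0}. c s * w s b')"
      by (rule sum.cong) (auto simp: c'_def)
    finally show ?thesis
      by (simp add: c'_def T_def)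
  qed
  fix b' assume b': "b' \<in> insert b B"
  show "(\<Sum>s\<in>S. c' s * w s b') = 0"
  proof (cases "b' = b")
    case True
    then show ?thesis
      using S by (simp add: sum_c' T_def)
  next
    case False
    then have "b' \<in> B"
      using b' by simp
    have "(\<Sum>s\<in>S - {s0}. c s * w s b') =
        (\<Sum>s\<in>S - {s0}. c s * (w s b' - w s b / w s0 b * w s0 b')) + w s0 b' / w s0 b * T"
      unfolding T_def
      by (simp add: sum_distrib_left algebra_simps sum.distrib[symmetric] sum_subtractf[symmetric])
    also have "\<dots> = w s0 b' / w s0 b * T"
      using reduced \<open>b' \<in> B\<close> by simp
    finally show ?thesis
      by (simp add: sum_c' field_simps)
  qed
qed

lemma homogeneous_system_nontrivial_solution:
  fixes w :: "'s \<Rightarrow> 'b \<Rightarrow> 'k::field"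
  assumes "finite B" "finite S" "card B < card S"
  shows "\<exists>c. (\<forall>b\<in>B. (\<Sum>s\<in>S. c s * w s b) = 0) \<and> (\<exists>s\<in>S. c s \<noteq> 0)"
  using assms
proof (induction B arbitrary: S w rule: finite_induct)
  case empty
  then show ?case
    by (intro exI[of _ "\<lambda>_. 1"]) (auto simp: card_gt_0_iff)
next
  case (insert b B)
  show ?case
  proof (cases "\<forall>s\<in>S. w s b = 0")
    case True
    have "card B < card S"
      using insert by simp
    then obtain c where "\<forall>b\<in>B. (\<Sum>s\<in>S. c s * w s b) = 0" "\<exists>s\<in>S. c s \<noteq> 0"
      using insert.IH insert.prems(1) by blast
    with True show ?thesis
      by auto
  next
    case False
    then obtain s0 where s0: "s0 \<in> S" "w s0 b \<noteq> 0"
      by blast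
    have "finite (S - {s0})" "card B < card (S - {s0})"
      using insert s0 by auto
    then obtain c where c: "\<forall>b'\<in>B. (\<Sum>s\<in>S - {s0}. c s * (w s b' - w s b / w s0 b * w s0 b')) = 0"
      "\<exists>s\<in>S - {s0}. c s \<noteq> 0"
      using insert.IH[of "S - {s0}" "\<lambda>s b'. w s b' - w s b / w s0 b * w s0 b'"] by blast
    define c' where "c' = c(s0 := - (\<Sum>s\<in>S - {s0}. c s * w s b) / w s0 b)"
    have "\<forall>b'\<in>insert b B. (\<Sum>s\<in>S. c' s * w s b') = 0"
      unfolding c'_def by (rule homogeneous_system_eliminate[OF insert.prems(1) s0 c(1)])
    moreover have "\<exists>s\<in>S. c' s \<noteq> 0"
      using c(2) by (auto simp: c'_def)
    ultimately show ?thesis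
      by blast
  qed
qed

section \<open>Inverse systems\<close>

text \<open>contr_supp U b is the support of the contraction x^b \<circ> F_U of F_U = \<Sum>{X^u | u \<in> U}, and
  coeff_sum (contr_supp U b) g is the coefficient of X^b in g \<circ> F_U; so ann n U is the annihilator
  of F_U.\<close>

definition contr_supp :: "monom set \<Rightarrow> monom \<Rightarrow> monom set" where
  "contr_supp U b = {a. b + a \<in> U}"

definition coeff_sum :: "monom set \<Rightarrow> 'k::field mpoly \<Rightarrow> 'k" where
  "coeff_sum A g = (\<Sum>a\<in>A. Poly_Mapping.lookup g a)"

definition ann :: "nat \<Rightarrow> monom set \<Rightarrow> 'k::field mpoly set" where
  "ann n U = {g \<in> polyring n. \<forall>b. coeff_sum (contr_supp U b) g = 0}"

lemma finite_contr_supp: "finite U \<Longrightarrow> finite (contr_supp U b)"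
  unfolding contr_supp_def
  by (rule finite_subset[of _ "(\<lambda>u. u - b) ` U"]) (auto intro: rev_image_eqI)

lemma coeff_sum_add: "coeff_sum A (f + g) = coeff_sum A f + coeff_sum A g"
  by (simp add: coeff_sum_def lookup_add sum.distrib)

lemma coeff_sum_cmul: "coeff_sum A (cmul c g) = c * coeff_sum A g"
  by (simp add: coeff_sum_def sum_distrib_left)

lemma coeff_sum_sum: "coeff_sum A (sum f S) = (\<Sum>s\<in>S. coeff_sum A (f s))"
  by (simp add: coeff_sum_def lookup_sum sum.swap[of _ A])

lemma coeff_sum_single:
  "finite A \<Longrightarrow> coeff_sum A (Poly_Mapping.single a 1) = (if a \<in> A then 1 else 0)"
  by (simp add: coeff_sum_def lookup_single when_def)

lemma coeff_sum_zero [simp]: "coeff_sum A 0 = 0"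
  by (simp add: coeff_sum_def)

lemma coeff_sum_empty [simp]: "coeff_sum {} g = 0"
  by (simp add: coeff_sum_def)

lemma coeff_sum_single_mult:
  assumes "finite U"
  shows "coeff_sum (contr_supp U b) (Poly_Mapping.single c x * g) = x * coeff_sum (contr_supp U (b + c)) g"
proof -
  have "coeff_sum (contr_supp U b) (Poly_Mapping.single c x * g)
      = (\<Sum>a\<in>(+) c ` contr_supp U (b + c). x * Poly_Mapping.lookup g (a - c))"
    unfolding coeff_sum_def lookup_single_mult
    using finite_contr_supp[OF assms]
    by (intro sum.mono_neutral_cong_right) (auto simp: contr_supp_def add.assoc)
  also have "\<dots> = x * coeff_sum (contr_supp U (b + c)) g"
    by (simp add: sum.reindex coeff_sum_def sum_distrib_left)
  finally show ?thesis .
qed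

lemma coeff_sum_mult:
  assumes "finite U"
  shows "coeff_sum (contr_supp U b) (q * g) =
    (\<Sum>c\<in>Poly_Mapping.keys q. Poly_Mapping.lookup q c * coeff_sum (contr_supp U (b + c)) g)"
proof -
  have "q * g = (\<Sum>c\<in>Poly_Mapping.keys q. Poly_Mapping.single c (Poly_Mapping.lookup q c) * g)"
    by (simp add: sum_single_lookup flip: sum_distrib_right)
  then show ?thesis
    by (simp add: coeff_sum_sum coeff_sum_single_mult assms)
qed

lemma is_ideal_ann: "finite U \<Longrightarrow> is_ideal n (ann n U)"
  by (auto simp: is_ideal_def ann_def coeff_sum_add coeff_sum_mult polyring_add polyring_mult)

lemma card_le_if_indep_mod_ann:
  fixes V :: "'k::field mpoly set" and \<A> :: "monom set set"
  assumes V: "V \<subseteq> polyring n" and fin: "finite \<A>"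
    and vanish: "\<And>b g. contr_supp U b \<notin> \<A> \<Longrightarrow> g \<in> V \<Longrightarrow> coeff_sum (contr_supp U b) g = 0"
    and S: "S \<subseteq> V" "indep_mod (ann n U) S"
  shows "card S \<le> card \<A>"
proof (rule ccontr)
  assume "\<not> card S \<le> card \<A>"
  moreover have "finite S"
    using S(2) by (simp add: indep_mod_def)
  ultimately obtain c where c: "\<forall>A\<in>\<A>. (\<Sum>s\<in>S. c s * coeff_sum A s) = 0" and nz: "\<exists>s\<in>S. c s \<noteq> 0"
    using homogeneous_system_nontrivial_solution[OF fin, of S "\<lambda>s A. coeff_sum A s"] by auto
  have "(\<Sum>s\<in>S. cmul (c s) s) \<in> ann n U"
    unfolding ann_def
  proof (intro CollectI conjI allI)
    show "(\<Sum>s\<in>S. cmul (c s) s) \<in> polyring n"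
      using S(1) V by (intro polyring_sum polyring_cmul) auto
    fix b
    have "coeff_sum (contr_supp U b) (\<Sum>s\<in>S. cmul (c s) s) = (\<Sum>s\<in>S. c s * coeff_sum (contr_supp U b) s)"
      by (simp add: coeff_sum_sum coeff_sum_cmul)
    also have "\<dots> = 0"
      using c vanish S(1) by (cases "contr_supp U b \<in> \<A>") (auto intro!: sum.neutral)
    finally show "coeff_sum (contr_supp U b) (\<Sum>s\<in>S. cmul (c s) s) = 0" .
  qed
  then show False
    using S(2) nz by (auto simp: indep_mod_def)
qed

lemma indep_mod_ann_dual_monomials:
  assumes U: "finite U" and fin: "finite \<A>" and realised: "\<A> \<subseteq> range (contr_supp U)"
    and disj: "pairwise disjnt \<A>" and nonempty: "{} \<notin> \<A>"
  obtains T :: "'k::field mpoly set"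
  where "indep_mod (ann n U) T" "card T = card \<A>" "T \<subseteq> (\<lambda>a. Poly_Mapping.single a 1) ` \<Union>\<A>"
proof -
  define pt where "pt A = (SOME a. a \<in> A)" for A :: "monom set"
  have pt: "pt A \<in> A" if "A \<in> \<A>" for A
    using nonempty that unfolding pt_def by (metis ex_in_conv someI_ex)
  define t where "t A = Poly_Mapping.single (pt A) (1::'k)" for A
  have t_dual: "coeff_sum A' (t A) = (if A' = A then 1 else 0)" if "A \<in> \<A>" "A' \<in> \<A>" for A A'
  proof -
    have "finite A'"
      using realised \<open>A' \<in> \<A>\<close> finite_contr_supp[OF U] by blast
    moreover have "pt A \<in> A' \<longleftrightarrow> A' = A"
      using disj pt that unfolding pairwise_def disjnt_def by blast
    ultimately show ?thesis
      by (simp add: t_def coeff_sum_single)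
  qed
  have inj: "inj_on t \<A>"
    by (rule inj_onI) (metis t_dual one_neq_zero)
  have "indep_mod (ann n U) (t ` \<A>)"
    unfolding indep_mod_def
  proof (intro conjI allI impI ballI)
    show "finite (t ` \<A>)"
      using fin by simp
    fix c s assume c: "(\<Sum>s\<in>t ` \<A>. cmul (c s) s) \<in> ann n U" and "s \<in> t ` \<A>"
    then obtain A0 where A0: "A0 \<in> \<A>" "s = t A0"
      by blast
    then obtain b where b: "contr_supp U b = A0"
      using realised by blast
    have "0 = coeff_sum A0 (\<Sum>s\<in>t ` \<A>. cmul (c s) s)"
      using c b unfolding ann_def by auto
    also have "\<dots> = (\<Sum>A\<in>\<A>. c (t A) * coeff_sum A0 (t A))"
      by (simp add: coeff_sum_sum coeff_sum_cmul sum.reindex[OF inj])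
    also have "\<dots> = (\<Sum>A\<in>\<A>. if A0 = A then c (t A) else 0)"
      using A0 by (intro sum.cong) (auto simp: t_dual)
    also have "\<dots> = c s"
      using A0 fin by simp
    finally show "c s = 0" ..
  qed
  moreover have "card (t ` \<A>) = card \<A>"
    using card_image[OF inj] .
  moreover have "t ` \<A> \<subseteq> (\<lambda>a. Poly_Mapping.single a 1) ` \<Union>\<A>"
    using pt by (auto simp: t_def)
  ultimately show ?thesis
    by (rule that)
qed

lemma qdim_ann:
  fixes V :: "'k::field mpoly set" and \<A> :: "monom set set"
  assumes U: "finite U" and V: "V \<subseteq> polyring n"
    and fin: "finite \<A>" and realised: "\<A> \<subseteq> range (contr_supp U)"
    and disj: "pairwise disjnt \<A>" and nonempty: "{} \<notin> \<A>"
    and dual: "\<And>A a. A \<in> \<A> \<Longrightarrow> a \<in> A \<Longrightarrow> Poly_Mapping.single a 1 \<in> V"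
    and vanish: "\<And>b g. contr_supp U b \<notin> \<A> \<Longrightarrow> g \<in> V \<Longrightarrow> coeff_sum (contr_supp U b) g = 0"
  shows "qdim (ann n U) V = card \<A>"
proof -
  obtain T :: "'k mpoly set"
    where T: "indep_mod (ann n U) T" "card T = card \<A>" "T \<subseteq> (\<lambda>a. Poly_Mapping.single a 1) ` \<Union>\<A>"
    using indep_mod_ann_dual_monomials[OF U fin realised disj nonempty] .
  have "T \<subseteq> V"
    using T(3) dual by auto
  then have "card \<A> \<in> {card S |S. S \<subseteq> V \<and> indep_mod (ann n U) S}"
    using T(1,2) by (intro CollectI exI[of _ T]) simp
  then show ?thesis
    unfolding qdim_def
    by (rule cSup_eq_maximum) (auto intro: card_le_if_indep_mod_ann[OF V fin vanish])
qed

section \<open>Dual forms of a fixed degree\<close>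

lemma finite_subset_monomials: "U \<subseteq> monomials n s \<Longrightarrow> finite U"
  using finite_subset finite_monomials by blast

lemma contr_supp_monomials:
  assumes "U \<subseteq> monomials n s" "a \<in> contr_supp U b"
  shows "mdeg b + mdeg a = s" "Poly_Mapping.keys a \<subseteq> {..<n}" "Poly_Mapping.keys b \<subseteq> {..<n}"
proof -
  have "b + a \<in> monomials n s"
    using assms by (auto simp: contr_supp_def)
  then show "mdeg b + mdeg a = s" "Poly_Mapping.keys a \<subseteq> {..<n}" "Poly_Mapping.keys b \<subseteq> {..<n}"
    by (auto simp: monomials_def mdeg_add keys_add_monom)
qed

lemma coeff_sum_hcomp:
  assumes "U \<subseteq> monomials n s"
  shows "coeff_sum (contr_supp U b) (hcomp d g) =
    (if mdeg b + d = s then coeff_sum (contr_supp U b) g else 0)"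
proof -
  have "coeff_sum (contr_supp U b) (hcomp d g) =
      (\<Sum>a\<in>contr_supp U b. if mdeg b + d = s then Poly_Mapping.lookup g a else 0)"
    unfolding coeff_sum_def lookup_hcomp
    by (intro sum.cong refl) (use contr_supp_monomials(1)[OF assms] in fastforce)
  then show ?thesis
    by (simp add: coeff_sum_def)
qed

lemma coeff_sum_homog:
  assumes "U \<subseteq> monomials n s" "g \<in> homog n d" "mdeg b + d \<noteq> s"
  shows "coeff_sum (contr_supp U b) g = 0"
proof -
  have "hcomp d g = g"
    using assms(2) by (intro poly_mapping_eqI) (auto simp: lookup_hcomp homog_def in_keys_iff)
  then show ?thesis
    using coeff_sum_hcomp[OF assms(1), of b d g] assms(3) by simp
qed

lemma homogeneous_ideal_ann:
  assumes "U \<subseteq> monomials n s"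
  shows "homogeneous_ideal n (ann n U)"
proof -
  have "hcomp d p \<in> ann n U" if "p \<in> ann n U" for p d
    using that by (simp add: ann_def coeff_sum_hcomp[OF assms] hcomp_polyring)
  then show ?thesis
    unfolding homogeneous_ideal_def using is_ideal_ann[OF finite_subset_monomials[OF assms]] by blast
qed

lemma homog_subset_ann:
  assumes "U \<subseteq> monomials n s" "s < d"
  shows "homog n d \<subseteq> ann n U"
proof
  fix g assume g: "g \<in> homog n d"
  then show "g \<in> ann n U"
    using coeff_sum_homog[OF assms(1) g] assms(2) by (auto simp: ann_def homog_def)
qed

lemma coeff_sum_socle:
  assumes U: "U \<subseteq> monomials n s" and g: "g \<in> socle n (ann n U)" and "b \<noteq> 0"
  shows "coeff_sum (contr_supp U b) g = 0"
proof (cases "contr_supp U b = {}")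
  case False
  then have keys_b: "Poly_Mapping.keys b \<subseteq> {..<n}"
    using contr_supp_monomials(3)[OF U] by blast
  obtain j where j: "j \<in> Poly_Mapping.keys b"
    using \<open>b \<noteq> 0\<close> by (metis ex_in_conv keys_eq_empty)
  define b' where "b' = b - Poly_Mapping.single j 1"
  have "b = b' + Poly_Mapping.single j 1"
    using j by (intro poly_mapping_eqI) (auto simp: b'_def lookup_add lookup_minus lookup_single when_def in_keys_iff)
  then have "coeff_sum (contr_supp U b) g = coeff_sum (contr_supp U b') (var j * g)"
    using finite_subset_monomials[OF U] by (simp add: var_def coeff_sum_single_mult)
  also have "\<dots> = 0"
    using g j keys_b by (auto simp: socle_def ann_def)
  finally show ?thesis .
qed simp

lemma single_in_socle_ann:
  assumes U: "U \<subseteq> monomials n s" and "u \<in> U"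
  shows "Poly_Mapping.single u 1 \<in> socle n (ann n U)"
proof -
  have u: "Poly_Mapping.keys u \<subseteq> {..<n}" "mdeg u = s"
    using assms by (auto simp: monomials_def)
  have "coeff_sum (contr_supp U b) (var j * Poly_Mapping.single u 1) = 0" for b j
  proof -
    have "Poly_Mapping.single j 1 + u \<notin> contr_supp U b"
      using contr_supp_monomials(1)[OF U, of "Poly_Mapping.single j 1 + u" b] u by (auto simp: mdeg_add)
    then show ?thesis
      using finite_contr_supp[OF finite_subset_monomials[OF U]]
      by (simp add: var_def mult_single coeff_sum_single)
  qed
  moreover have "var j * Poly_Mapping.single u 1 \<in> polyring n" if "j < n" for j
    using u that by (simp add: var_def mult_single polyring_single keys_add_monom)
  ultimately show ?thesis
    using u by (auto simp: socle_def ann_def polyring_single)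
qed

lemma qdim_socle_ann:
  assumes U: "U \<subseteq> monomials n s" and "U \<noteq> {}"
  shows "qdim (ann n U) (socle n (ann n U)) = (1::nat)"
proof -
  have U0: "contr_supp U 0 = U"
    by (simp add: contr_supp_def)
  have "qdim (ann n U) (socle n (ann n U)) = card {U}"
  proof (rule qdim_ann)
    show "finite U"
      using finite_subset_monomials[OF U] .
    show "socle n (ann n U) \<subseteq> polyring n"
      by (auto simp: socle_def)
    show "{U} \<subseteq> range (contr_supp U)"
      using U0 by auto
    show "{} \<notin> {U}"
      using assms(2) by simp
    show "Poly_Mapping.single a 1 \<in> socle n (ann n U)" if "A \<in> {U}" "a \<in> A" for A a
      using that single_in_socle_ann[OF U] by simp
    show "coeff_sum (contr_supp U b) g = 0" if "contr_supp U b \<notin> {U}" "g \<in> socle n (ann n U)" for b g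
      using that U0 by (cases "b = 0") (auto intro: coeff_sum_socle[OF U])
  qed simp_all
  then show ?thesis
    by simp
qed

lemma ann_inter_linear_forms:
  assumes cover: "\<And>i. i < n \<Longrightarrow> \<exists>b. contr_supp U b = {Poly_Mapping.single i 1}"
  shows "ann n U \<inter> homog n 1 = {0}"
proof -
  have "a \<notin> Poly_Mapping.keys l" if l: "l \<in> ann n U \<inter> homog n 1" for l a
  proof
    assume a: "a \<in> Poly_Mapping.keys l"
    then have "mdeg a = 1" "Poly_Mapping.keys a \<subseteq> {..<n}"
      using l by (auto simp: homog_def polyring_def)
    then obtain i where "a = Poly_Mapping.single i 1" "i < n"
      using mdeg_eq_1_iff by auto
    then obtain b where b: "contr_supp U b = {a}"
      using cover by blast
    have "coeff_sum (contr_supp U b) l = 0"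
      using l by (simp add: ann_def)
    then have "Poly_Mapping.lookup l a = 0"
      using b by (simp add: coeff_sum_def)
    then show False
      using a by (simp add: in_keys_iff)
  qed
  then have "ann n U \<inter> homog n 1 \<subseteq> {0}"
    by (metis ex_in_conv keys_eq_empty singletonI subsetI)
  then show ?thesis
    by (auto simp: ann_def homog_def)
qed

lemma graded_AG_ann:
  assumes U: "U \<subseteq> monomials n s" "U \<noteq> {}"
    and cover: "\<And>i. i < n \<Longrightarrow> \<exists>b. contr_supp U b = {Poly_Mapping.single i 1}"
  shows "graded_AG n (ann n U)"
  unfolding graded_AG_def
  using homogeneous_ideal_ann[OF U(1)] ann_inter_linear_forms[OF cover]
    homog_subset_ann[OF U(1)] qdim_socle_ann[OF U]
  by (metis Suc_le_eq)

definition contractions :: "monom set \<Rightarrow> nat \<Rightarrow> monom set set" where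
  "contractions U e = {contr_supp U b | b. mdeg b = e} - {{}}"

lemma finite_contractions:
  assumes "U \<subseteq> monomials n s"
  shows "finite (contractions U e)"
proof -
  have "A \<in> contr_supp U ` monomials n e" if A: "A \<in> contractions U e" for A
  proof -
    obtain b where b: "mdeg b = e" "A = contr_supp U b" "A \<noteq> {}"
      using A by (auto simp: contractions_def)
    then have "Poly_Mapping.keys b \<subseteq> {..<n}"
      using contr_supp_monomials(3)[OF assms] by blast
    with b show ?thesis
      by (auto simp: monomials_def)
  qed
  then show ?thesis
    by (meson finite_imageI finite_monomials finite_subset subsetI)
qed

lemma hilb_ann:
  assumes U: "U \<subseteq> monomials n s" and "d \<le> s"
    and disj: "pairwise disjnt (contractions U (s - d))"
  shows "hilb n (ann n U :: 'k::field mpoly set) d = card (contractions U (s - d))"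
  unfolding hilb_def
proof (rule qdim_ann)
  show "finite U"
    using finite_subset_monomials[OF U] .
  show "homog n d \<subseteq> polyring n"
    by (auto simp: homog_def)
  show "finite (contractions U (s - d))"
    using finite_contractions[OF U] .
  show "contractions U (s - d) \<subseteq> range (contr_supp U)" "{} \<notin> contractions U (s - d)"
    by (auto simp: contractions_def)
  show "pairwise disjnt (contractions U (s - d))"
    using disj .
  show "Poly_Mapping.single a 1 \<in> homog n d" if A: "A \<in> contractions U (s - d)" and "a \<in> A" for A a
  proof -
    obtain b where "mdeg b = s - d" "A = contr_supp U b"
      using A by (auto simp: contractions_def)
    with \<open>a \<in> A\<close> have "a \<in> monomials n d"
      using contr_supp_monomials[OF U, of a b] \<open>d \<le> s\<close> by (simp add: monomials_def)
    then show ?thesis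
      by (rule single_in_homog)
  qed
  show "coeff_sum (contr_supp U b) g = 0"
    if "contr_supp U b \<notin> contractions U (s - d)" "g \<in> homog n d" for b and g :: "'k mpoly"
  proof (cases "mdeg b + d = s")
    case True
    then have "mdeg b = s - d"
      by simp
    then have "contr_supp U b = {}"
      using that(1) unfolding contractions_def by blast
    then show ?thesis
      by simp
  next
    case False
    then show ?thesis
      using coeff_sum_homog[OF U that(2)] by simp
  qed
qed

lemma hilb_ann_above:
  assumes U: "U \<subseteq> monomials n s" and "s < d"
  shows "hilb n (ann n U :: 'k::field mpoly set) d = 0"
proof -
  have "hilb n (ann n U :: 'k mpoly set) d = card ({} :: monom set set)"
    unfolding hilb_def
  proof (rule qdim_ann)
    show "finite U"
      using finite_subset_monomials[OF U] .
    show "homog n d \<subseteq> polyring n"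
      by (auto simp: homog_def)
    show "coeff_sum (contr_supp U b) g = 0" if "g \<in> homog n d" for b and g :: "'k mpoly"
      using coeff_sum_homog[OF U that] \<open>s < d\<close> by simp
    show "finite ({} :: monom set set)" "{} \<subseteq> range (contr_supp U)" "pairwise disjnt ({} :: monom set set)"
      "{} \<notin> ({} :: monom set set)"
      by simp_all
    show "Poly_Mapping.single a 1 \<in> homog n d" if "A \<in> {}" for A a
      using that by simp
  qed
  then show ?thesis
    by simp
qed

lemma contractions_0:
  assumes "U \<noteq> {}"
  shows "contractions U 0 = {U}"
proof -
  have "{contr_supp U b | b. mdeg b = 0} = {contr_supp U 0}"
    by (simp add: mdeg_eq_0_iff)
  moreover have "contr_supp U 0 = U"
    by (simp add: contr_supp_def)
  ultimately show ?thesis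
    using assms by (simp add: contractions_def)
qed

lemma contractions_top:
  assumes U: "U \<subseteq> monomials n s" "U \<noteq> {}"
  shows "contractions U s = {{0}}"
proof -
  have "contr_supp U b = {} \<or> contr_supp U b = {0}" if "mdeg b = s" for b
  proof -
    have "a = 0" if "a \<in> contr_supp U b" for a
      using contr_supp_monomials(1)[OF U(1) that] \<open>mdeg b = s\<close> by (simp add: mdeg_eq_0_iff)
    then show ?thesis
      by blast
  qed
  moreover obtain u where "u \<in> U" "mdeg u = s"
    using U by (auto simp: monomials_def)
  moreover from this have "0 \<in> contr_supp U u"
    by (simp add: contr_supp_def)
  ultimately have "{contr_supp U b | b. mdeg b = s} - {{}} = {{0}}"
    by blast
  then show ?thesis
    by (simp add: contractions_def)
qed

lemma hilb_ann_0: "U \<subseteq> monomials n s \<Longrightarrow> U \<noteq> {} \<Longrightarrow> hilb n (ann n U) 0 = 1"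
  using hilb_ann[of U n s 0] contractions_top[of U n s] by simp

lemma hilb_ann_socle_degree: "U \<subseteq> monomials n s \<Longrightarrow> U \<noteq> {} \<Longrightarrow> hilb n (ann n U) s = 1"
  using hilb_ann[of U n s s] contractions_0[of U] by simp

section \<open>The dual form \<Sum> y_k M_k\<close>

text \<open>The variables x_k with k < m are the x's and those with m \<le> k < n are the y's; M enumerates the
  quartic monomials in the x's, and F is the support of \<Sum>{x_k M k | m \<le> k < n}.\<close>

locale quintic_dual_form =
  fixes m n :: nat and M :: "nat \<Rightarrow> monom"
  assumes m_pos: "0 < m" and bij_M: "bij_betw M {m..<n} (monomials m 4)"
begin

definition F :: "monom set" where
  "F = (\<lambda>k. Poly_Mapping.single k 1 + M k) ` {m..<n}"

lemma M_monomial: "k \<in> {m..<n} \<Longrightarrow> Poly_Mapping.keys (M k) \<subseteq> {..<m} \<and> mdeg (M k) = 4"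
  using bij_betw_apply[OF bij_M, of k] by (simp add: monomials_def)

lemma lookup_F_monomial:
  assumes "k \<in> {m..<n}" "m \<le> j"
  shows "Poly_Mapping.lookup (Poly_Mapping.single k 1 + M k) j = (if j = k then 1 else 0)"
  using lookup_beyond_keys[of "M k" m j] M_monomial[OF assms(1)] assms(2)
  by (simp add: lookup_add lookup_single)

lemma F_subset_monomials: "F \<subseteq> monomials n 5"
proof
  fix u assume "u \<in> F"
  then obtain k where k: "k \<in> {m..<n}" "u = Poly_Mapping.single k 1 + M k"
    by (auto simp: F_def)
  then have "Poly_Mapping.keys (M k) \<subseteq> {..<n}" "mdeg (M k) = 4"
    using M_monomial[OF k(1)] by auto
  then show "u \<in> monomials n 5"
    using k by (simp add: monomials_def keys_add_monom mdeg_add)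
qed

lemma M_padded:
  assumes "Poly_Mapping.keys q \<subseteq> {..<m}" "mdeg q \<le> 4"
  obtains k where "k \<in> {m..<n}" "M k = q + Poly_Mapping.single 0 (4 - mdeg q)"
proof -
  have "q + Poly_Mapping.single 0 (4 - mdeg q) \<in> monomials m 4"
    using assms m_pos by (simp add: monomials_def keys_add_monom mdeg_add)
  then have "q + Poly_Mapping.single 0 (4 - mdeg q) \<in> M ` {m..<n}"
    by (simp add: bij_betw_imp_surj_on[OF bij_M])
  then show ?thesis
    using that by (metis imageE)
qed

lemma F_nonempty: "F \<noteq> {}"
proof -
  obtain k where "k \<in> {m..<n}"
    by (rule M_padded[of 0]) simp_all
  then show ?thesis
    by (auto simp: F_def)
qed

lemma contr_supp_F_lookup:
  assumes "a \<in> contr_supp F b" "m \<le> j" "Poly_Mapping.lookup (b + a) j \<noteq> 0"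
  shows "b + a = Poly_Mapping.single j 1 + M j" "j \<in> {m..<n}"
proof -
  obtain k where k: "k \<in> {m..<n}" "b + a = Poly_Mapping.single k 1 + M k"
    using assms(1) by (auto simp: contr_supp_def F_def)
  then have "j = k"
    using assms(3) lookup_F_monomial[OF k(1) assms(2)] by (simp split: if_splits)
  then show "b + a = Poly_Mapping.single j 1 + M j" "j \<in> {m..<n}"
    using k by simp_all
qed

text \<open>Every monomial of F contains exactly one y-variable, to the first power, and it lies either in
  b or in a.\<close>

lemma contr_supp_F_pure_iff:
  assumes "a \<in> contr_supp F b"
  shows "Poly_Mapping.keys a \<subseteq> {..<m} \<longleftrightarrow> \<not> Poly_Mapping.keys b \<subseteq> {..<m}"
proof -
  obtain k where k: "k \<in> {m..<n}" "b + a = Poly_Mapping.single k 1 + M k"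
    using assms by (auto simp: contr_supp_def F_def)
  have sum: "Poly_Mapping.lookup b i + Poly_Mapping.lookup a i = (if i = k then 1 else 0)" if "m \<le> i" for i
    using lookup_F_monomial[OF k(1) that] k(2) by (metis lookup_add)
  show ?thesis
  proof
    assume "Poly_Mapping.keys a \<subseteq> {..<m}"
    then have "Poly_Mapping.lookup b k = 1"
      using sum[of k] lookup_beyond_keys[of a m k] k(1) by simp
    then show "\<not> Poly_Mapping.keys b \<subseteq> {..<m}"
      using k(1) lookup_beyond_keys[of b m k] by auto
  next
    assume "\<not> Poly_Mapping.keys b \<subseteq> {..<m}"
    then obtain j where j: "j \<in> Poly_Mapping.keys b" "\<not> j < m"
      by auto
    then have "j = k" "Poly_Mapping.lookup a k = 0"
      using sum[of j] by (auto simp: in_keys_iff split: if_splits)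
    then have "Poly_Mapping.lookup a i = 0" if "m \<le> i" for i
      using sum[OF that] by (cases "i = k") simp_all
    then show "Poly_Mapping.keys a \<subseteq> {..<m}"
      by (metis in_keys_iff lessThan_iff not_le subsetI)
  qed
qed

lemma contr_supp_F_mixed:
  assumes "a \<in> contr_supp F b" "\<not> Poly_Mapping.keys b \<subseteq> {..<m}"
  shows "contr_supp F b = {a}"
proof -
  obtain j where "j \<in> Poly_Mapping.keys b" "\<not> j < m"
    using assms(2) by auto
  then have j: "m \<le> j" "Poly_Mapping.lookup b j \<noteq> 0"
    by (simp_all add: in_keys_iff)
  have eq: "b + a' = Poly_Mapping.single j 1 + M j" if "a' \<in> contr_supp F b" for a'
    using contr_supp_F_lookup(1)[OF that j(1)] j(2) by (simp add: lookup_add)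
  have "a' = a" if "a' \<in> contr_supp F b" for a'
    using eq[OF that] eq[OF assms(1)] by (metis add_left_cancel)
  then show ?thesis
    using assms(1) by blast
qed

lemma contr_supp_F_pure_unique:
  assumes "Poly_Mapping.keys c \<subseteq> {..<m}" "Poly_Mapping.keys c' \<subseteq> {..<m}"
    and "a \<in> contr_supp F c" "a \<in> contr_supp F c'"
  shows "c = c'"
proof -
  obtain j where "j \<in> Poly_Mapping.keys a" "\<not> j < m"
    using contr_supp_F_pure_iff[OF assms(3)] assms(1) by auto
  then have j: "m \<le> j" "Poly_Mapping.lookup a j \<noteq> 0"
    by (simp_all add: in_keys_iff)
  have "c + a = Poly_Mapping.single j 1 + M j" "c' + a = Poly_Mapping.single j 1 + M j"
    using contr_supp_F_lookup(1)[OF assms(3) j(1)] contr_supp_F_lookup(1)[OF assms(4) j(1)] j(2)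
    by (simp_all add: lookup_add)
  then show ?thesis
    by (metis add_right_imp_eq)
qed

lemma contr_supp_F_overlap:
  assumes "a \<in> contr_supp F b" "a \<in> contr_supp F b'"
  shows "contr_supp F b = contr_supp F b'"
proof (cases "Poly_Mapping.keys a \<subseteq> {..<m}")
  case True
  then have "\<not> Poly_Mapping.keys b \<subseteq> {..<m}" "\<not> Poly_Mapping.keys b' \<subseteq> {..<m}"
    using contr_supp_F_pure_iff assms by blast+
  then show ?thesis
    using contr_supp_F_mixed[OF assms(1)] contr_supp_F_mixed[OF assms(2)] by simp
next
  case False
  then have "Poly_Mapping.keys b \<subseteq> {..<m}" "Poly_Mapping.keys b' \<subseteq> {..<m}"
    using contr_supp_F_pure_iff assms by blast+
  then show ?thesis
    using contr_supp_F_pure_unique assms by blast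
qed

lemma pairwise_disjnt_contractions_F: "pairwise disjnt (contractions F e)"
proof (rule pairwiseI)
  fix A B assume "A \<in> contractions F e" "B \<in> contractions F e" "A \<noteq> B"
  then obtain b b' where "A = contr_supp F b" "B = contr_supp F b'" "A \<noteq> B"
    by (auto simp: contractions_def)
  then show "disjnt A B"
    using contr_supp_F_overlap by (auto simp: disjnt_def)
qed

lemma contr_supp_F_pure_nonempty:
  assumes "Poly_Mapping.keys c \<subseteq> {..<m}" "mdeg c \<le> 4"
  shows "contr_supp F c \<noteq> {}"
proof -
  obtain k where k: "k \<in> {m..<n}" "M k = c + Poly_Mapping.single 0 (4 - mdeg c)"
    using M_padded[OF assms] .
  have "c + (Poly_Mapping.single k 1 + Poly_Mapping.single 0 (4 - mdeg c)) = Poly_Mapping.single k 1 + M k"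
    by (simp add: k(2) ac_simps)
  then have "c + (Poly_Mapping.single k 1 + Poly_Mapping.single 0 (4 - mdeg c)) \<in> F"
    using k(1) unfolding F_def by (rule image_eqI)
  then have "Poly_Mapping.single k 1 + Poly_Mapping.single 0 (4 - mdeg c) \<in> contr_supp F c"
    by (simp add: contr_supp_def)
  then show ?thesis
    by blast
qed

lemma contr_supp_F_singleton:
  assumes "Poly_Mapping.keys q \<subseteq> {..<m}" "mdeg q \<le> 4"
  obtains b where "mdeg b + mdeg q = 5" "contr_supp F b = {q}"
proof -
  obtain k where k: "k \<in> {m..<n}" "M k = q + Poly_Mapping.single 0 (4 - mdeg q)"
    using M_padded[OF assms] .
  define b where "b = Poly_Mapping.single k 1 + Poly_Mapping.single 0 (4 - mdeg q)"
  have "b + q = Poly_Mapping.single k 1 + M k"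
    by (simp add: b_def k(2) ac_simps)
  then have "b + q \<in> F"
    using k(1) unfolding F_def by (rule image_eqI)
  then have "q \<in> contr_supp F b"
    by (simp add: contr_supp_def)
  moreover have "\<not> Poly_Mapping.keys b \<subseteq> {..<m}"
    using k(1) m_pos by (auto simp: b_def keys_add_monom)
  ultimately have "contr_supp F b = {q}"
    by (rule contr_supp_F_mixed)
  moreover have "mdeg b + mdeg q = 5"
    using assms(2) by (simp add: b_def mdeg_add)
  ultimately show ?thesis
    using that by blast
qed

lemma contractions_F:
  assumes "1 \<le> e" "e \<le> 4"
  shows "contractions F e = contr_supp F ` monomials m e \<union> (\<lambda>q. {q}) ` monomials m (5 - e)"
proof (intro equalityI subsetI)
  fix A assume "A \<in> contractions F e"
  then obtain b a where b: "mdeg b = e" "A = contr_supp F b" "a \<in> A"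
    by (auto simp: contractions_def)
  show "A \<in> contr_supp F ` monomials m e \<union> (\<lambda>q. {q}) ` monomials m (5 - e)"
  proof (cases "Poly_Mapping.keys b \<subseteq> {..<m}")
    case True
    then show ?thesis
      using b by (auto simp: monomials_def)
  next
    case False
    then have "A = {a}" "Poly_Mapping.keys a \<subseteq> {..<m}"
      using b contr_supp_F_mixed contr_supp_F_pure_iff by auto
    moreover have "mdeg a = 5 - e"
      using contr_supp_monomials(1)[OF F_subset_monomials] b by fastforce
    ultimately show ?thesis
      by (auto simp: monomials_def)
  qed
next
  fix A assume "A \<in> contr_supp F ` monomials m e \<union> (\<lambda>q. {q}) ` monomials m (5 - e)"
  then show "A \<in> contractions F e"
  proof
    assume "A \<in> contr_supp F ` monomials m e"
    then show ?thesis
      using contr_supp_F_pure_nonempty assms by (auto simp: contractions_def monomials_def)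
  next
    assume "A \<in> (\<lambda>q. {q}) ` monomials m (5 - e)"
    then obtain q where q: "A = {q}" "Poly_Mapping.keys q \<subseteq> {..<m}" "mdeg q = 5 - e"
      by (auto simp: monomials_def)
    moreover have "mdeg q \<le> 4"
      using q(3) assms(1) by simp
    ultimately obtain b where "mdeg b + mdeg q = 5" "contr_supp F b = {q}"
      using contr_supp_F_singleton by blast
    moreover from this have "mdeg b = e"
      using q(3) assms by simp
    ultimately show ?thesis
      using q(1) unfolding contractions_def by blast
  qed
qed

lemma card_contractions_F:
  assumes "1 \<le> e" "e \<le> 4"
  shows "card (contractions F e) = card (monomials m e) + card (monomials m (5 - e))"
proof -
  have inj: "inj_on (contr_supp F) (monomials m e)"
  proof (rule inj_onI)
    fix c c' assume c: "c \<in> monomials m e" "c' \<in> monomials m e" "contr_supp F c = contr_supp F c'"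
    then obtain a where "a \<in> contr_supp F c" "a \<in> contr_supp F c'"
      using contr_supp_F_pure_nonempty assms by (fastforce simp: monomials_def)
    then show "c = c'"
      using contr_supp_F_pure_unique c by (auto simp: monomials_def)
  qed
  have "contr_supp F c \<noteq> {q}" if "c \<in> monomials m e" "q \<in> monomials m (5 - e)" for c q
    using that contr_supp_F_pure_iff[of q c] by (auto simp: monomials_def)
  then have "contr_supp F ` monomials m e \<inter> (\<lambda>q. {q}) ` monomials m (5 - e) = {}"
    by blast
  then show ?thesis
    by (simp add: contractions_F[OF assms] card_Un_disjoint card_image[OF inj] card_image)
qed

lemma contr_supp_F_M:
  assumes i: "i \<in> {m..<n}"
  shows "contr_supp F (M i) = {Poly_Mapping.single i 1}"
proof -
  have "a = Poly_Mapping.single i 1" if a: "a \<in> contr_supp F (M i)" for a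
  proof -
    have "\<not> Poly_Mapping.keys a \<subseteq> {..<m}"
      using contr_supp_F_pure_iff[OF a] M_monomial[OF i] by simp
    then obtain j where "j \<in> Poly_Mapping.keys a" "\<not> j < m"
      by auto
    then have j: "M i + a = Poly_Mapping.single j 1 + M j" "j \<in> {m..<n}"
      using contr_supp_F_lookup[OF a, of j] by (simp_all add: lookup_add in_keys_iff)
    have "mdeg (M i + a) = mdeg (Poly_Mapping.single j 1 + M j)"
      using j(1) by simp
    then have "mdeg a = 1"
      using M_monomial[OF i] M_monomial[OF j(2)] by (simp add: mdeg_add)
    then obtain l where l: "a = Poly_Mapping.single l 1"
      using mdeg_eq_1_iff by blast
    with \<open>j \<in> Poly_Mapping.keys a\<close> have "l = j"
      by (simp split: if_splits)
    with j(1) l have "M i = M j"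
      by (simp add: add.commute)
    then have "i = j"
      using bij_betw_imp_inj_on[OF bij_M] i j(2) by (auto dest: inj_onD)
    with l \<open>l = j\<close> show ?thesis
      by simp
  qed
  moreover have "Poly_Mapping.single i 1 \<in> contr_supp F (M i)"
    using i by (auto simp: contr_supp_def F_def add.commute)
  ultimately show ?thesis
    by blast
qed

lemma contr_supp_F_variable:
  assumes "i < n"
  obtains b where "contr_supp F b = {Poly_Mapping.single i 1}"
proof (cases "i < m")
  case True
  then show ?thesis
    using contr_supp_F_singleton[of "Poly_Mapping.single i 1"] that by auto
next
  case False
  then show ?thesis
    using contr_supp_F_M[of i] assms that by simp
qed

lemma card_monomials_4: "card (monomials m 4) + m = n"
proof -
  have "n - m = card (monomials m 4)"
    using bij_betw_same_card[OF bij_M] by simp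
  moreover have "m < n"
    using F_nonempty by (auto simp: F_def)
  ultimately show ?thesis
    by simp
qed

lemma hilb_ann_F_middle:
  assumes "1 \<le> d" "d \<le> 4"
  shows "hilb n (ann n F :: 'k::field mpoly set) d = card (monomials m (5 - d)) + card (monomials m d)"
proof -
  have "hilb n (ann n F :: 'k mpoly set) d = card (contractions F (5 - d))"
    using assms by (intro hilb_ann[OF F_subset_monomials _ pairwise_disjnt_contractions_F]) simp
  also have "\<dots> = card (monomials m (5 - d)) + card (monomials m (5 - (5 - d)))"
    using assms by (intro card_contractions_F) simp_all
  finally show ?thesis
    using assms by simp
qed

lemma hilb_ann_F:
  "hilb n (ann n F :: 'k::field mpoly set) d = seq_5 n (card (monomials m 2) + card (monomials m 3)) d"
proof -
  have "card (monomials m 1) = m"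
    by (simp add: card_monomials)
  consider "d = 0" | "d = 1" | "d = 2" | "d = 3" | "d = 4" | "d = 5" | "5 < d"
    by linarith
  then show ?thesis
  proof cases
    case 1
    then show ?thesis
      using hilb_ann_0[OF F_subset_monomials F_nonempty] by (simp add: seq_5_def)
  next
    case 6
    then show ?thesis
      using hilb_ann_socle_degree[OF F_subset_monomials F_nonempty] by (simp add: seq_5_def)
  next
    case 7
    then show ?thesis
      using hilb_ann_above[OF F_subset_monomials] by (simp add: seq_5_def)
  qed (use hilb_ann_F_middle[where 'k='k] card_monomials_4 \<open>card (monomials m 1) = m\<close>
      in \<open>simp_all add: seq_5_def add.commute\<close>)
qed

lemma AG_hilbert_function_F:
  "AG_hilbert_function TYPE('k::field) (seq_5 n (card (monomials m 2) + card (monomials m 3)))"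
proof -
  have "graded_AG n (ann n F :: 'k mpoly set)"
    using graded_AG_ann[OF F_subset_monomials F_nonempty] contr_supp_F_variable by metis
  then show ?thesis
    unfolding AG_hilbert_function_def using hilb_ann_F by blast
qed

end

lemma AG_hilbert_function_quintic:
  assumes "0 < m"
  shows "AG_hilbert_function TYPE('k::field)
    (seq_5 (m + (m + 3 choose 4)) ((m + 1 choose 2) + (m + 2 choose 3)))"
proof -
  define n where "n = m + (m + 3 choose 4)"
  have "card {m..<n} = card (monomials m 4)"
    by (simp add: n_def card_monomials add.commute)
  then obtain M where "bij_betw M {m..<n} (monomials m 4)"
    by (metis finite_atLeastLessThan finite_monomials finite_same_card_bij)
  then interpret quintic_dual_form m n M
    using assms by unfold_locales
  show ?thesis
    using AG_hilbert_function_F by (simp add: n_def card_monomials add.commute)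
qed

theorem proposition3p14:
  fixes m :: nat
  assumes "m \<ge> 3"
  shows "real_of_int (delta TYPE('k::field_char_0) (m + (m + 3 choose 4)))
           \<ge> (real m + 5) / 4 * real (m choose 3)"
proof -
  define r where "r = m + (m + 3 choose 4)"
  define h where "h = (m + 1 choose 2) + (m + 2 choose 3)"
  have "AG_hilbert_function TYPE('k) (seq_5 r h)"
    using AG_hilbert_function_quintic[of m] assms by (simp add: r_def h_def)
  then have "mu TYPE('k) r \<le> h"
    unfolding mu_def by (rule Least_le)
  then have "real r - real h \<le> real_of_int (delta TYPE('k) r)"
    by (simp add: delta_def)
  moreover have "real r - real h = (real m + 5) / 4 * real (m choose 3)"
    by (simp add: r_def h_def binomial_gbinomial gbinomial_prod_rev numeral_eq_Suc field_simps)
  ultimately show ?thesis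
    by (simp add: r_def)
qed

end
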